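(* Let $W$ be a smooth function supported in $[1,2]$, let $Q\ge 2$, let $1\le X\le Q^2$, and let $C\ge1$. Let $(a_n)_{n\le X}$, $(b_n)_{n\le X}$ be complex numbers (set $a_n=b_n=0$ for $n>X$) such that for every $\epsilon>0$ and every $K>0$, $$\sum_{\substack{m\le u\\(m,c)=1}}a_{m\ell}\psi(m)\ll_{\epsilon,K}\ell^{-1/2}Q^\epsilon,\qquad \sum_{\substack{n\le v\\(n,c)=1}}b_{n\ell}\psi(n)\ll_{\epsilon,K}\ell^{-1/2}Q^\epsilon,$$ uniformly for positive integers $c,\ell\le KX$, reals $u,v\le KX$, and Dirichlet characters $\psi$ of conductor at most $KQ$. For positive integers $m\ne n$ define $$U(m,n)=\sum_{\substack{a,c,d\ge1,\ (acd,mn)=1\\ ad\mid m-n,\ c>C}}\frac{W(a^2cd/Q)\mu(a)\mu(ac)}{a\,\phi(ac)}.$$ Then for every $\epsilon>0$, $$U_E:=\sum_{\substack{m,n\le X\\ m\ne n}}a_mb_nU(m,n)\ll_\epsilon \frac{Q}{C}Q^{\epsilon},$$ with the implied constant independent of $C$.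
   Context: $\mu$ is the Möbius function and $\phi$ is Euler's function. *)

theory Defs
  imports "HOL-Analysis.Analysis" "HOL-Number_Theory.Number_Theory" "HOL-Computational_Algebra.Squarefree"
begin

definition moebius_mu :: "nat \<Rightarrow> int" where
  "moebius_mu n = (if n = 0 \<or> \<not> squarefree n then 0 else (-1) ^ card (prime_factors n))"

definition smooth_fun :: "(real \<Rightarrow> real) \<Rightarrow> bool" where
  "smooth_fun W \<longleftrightarrow> (\<forall>k x. ((deriv ^^ k) W) differentiable (at x))"

definition dirichlet_char :: "nat \<Rightarrow> (nat \<Rightarrow> complex) \<Rightarrow> bool" where
  "dirichlet_char q \<theta> \<longleftrightarrow> q \<ge> 1 \<and>
     (\<forall>m n. \<theta> (m * n) = \<theta> m * \<theta> n) \<and>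
     (\<forall>n. \<theta> (n + q) = \<theta> n) \<and>
     (\<forall>n. \<theta> n = 0 \<longleftrightarrow> \<not> coprime n q)"

definition induced_mod :: "nat \<Rightarrow> nat \<Rightarrow> (nat \<Rightarrow> complex) \<Rightarrow> bool" where
  "induced_mod q d \<theta> \<longleftrightarrow> d dvd q \<and>
     (\<exists>\<theta>'. dirichlet_char d \<theta>' \<and> (\<forall>n. coprime n q \<longrightarrow> \<theta> n = \<theta>' n))"

definition conductor :: "nat \<Rightarrow> (nat \<Rightarrow> complex) \<Rightarrow> nat" where
  "conductor q \<theta> = (LEAST d. d \<ge> 1 \<and> induced_mod q d \<theta>)"

definition U_fun :: "(real \<Rightarrow> real) \<Rightarrow> real \<Rightarrow> real \<Rightarrow> nat \<Rightarrow> nat \<Rightarrow> real" where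
  "U_fun W Q C m n =
     infsum (\<lambda>(a, c, d). W (real (a^2 * c * d) / Q) * real_of_int (moebius_mu a) * real_of_int (moebius_mu (a * c))
                        / (real a * real (totient (a * c))))
       {(a, c, d). a \<ge> 1 \<and> c \<ge> 1 \<and> d \<ge> 1 \<and> coprime (a * c * d) (m * n)
                  \<and> int (a * d) dvd (int m - int n) \<and> real c > C}"

end

(*
  Expanding U(m,n) and exchanging the sums, U_E becomes a sum over triples (a,c,d) with
  c > C and a^2 c d <= 2Q (outside this range W vanishes) of the weight
  W(a^2cd/Q) mu(a) mu(ac) / (a phi(ac)) times the bilinear form
  E = sum_{m <> n} a_m b_n [(acd, mn) = 1, ad | m - n].
  Writing the condition ad | m - n for m, n coprime to acd as an average over the characters
  of (Z/adZ)^*, lifted to Dirichlet characters modulo acd <= 2Q, the form with the diagonal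
  included is an average of products of two twisted sums, hence << Q^(2 eps). The diagonal
  m = n costs sum_m |a_m b_m| << Q^(2 eps) log Q by the pointwise bounds |a_m| << m^(-1/2) Q^eps,
  which are twisted sums of length one. Finally phi(n) >> n^(1-eps) gives
  sum 1/(a phi(ac)) <= Q^eps sum_{a,c,d} 1/(a^2 c) << Q^(1+eps) sum_a 1/a^2 sum_{c>C} 1/c^2 << Q^(1+eps)/C.
*)

theory Submission
  imports Defs "HOL-Algebra.Multiplicative_Group"
begin

section \<open>Characters of finite abelian groups\<close>

definition character_on :: "('a, 'b) monoid_scheme \<Rightarrow> 'a set \<Rightarrow> ('a \<Rightarrow> complex) \<Rightarrow> bool" where
  "character_on G H f \<longleftrightarrow> (\<forall>x\<in>H. \<forall>y\<in>H. f (x \<otimes>\<^bsub>G\<^esub> y) = f x * f y) \<and> (\<forall>x\<in>H. f x \<noteq> 0)"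

definition adjoin :: "('a, 'b) monoid_scheme \<Rightarrow> 'a set \<Rightarrow> 'a \<Rightarrow> 'a set" where
  "adjoin G H g = {h \<otimes>\<^bsub>G\<^esub> g [^]\<^bsub>G\<^esub> (i::int) | h i. h \<in> H}"

text \<open>Restricting to extensional functions makes the set of characters finite.\<close>

definition characters :: "('a, 'b) monoid_scheme \<Rightarrow> ('a \<Rightarrow> complex) set" where
  "characters G = {f. character_on G (carrier G) f \<and> f \<in> extensional (carrier G)}"

lemma exists_nth_root_complex:
  fixes w :: complex assumes "0 < k" shows "\<exists>z. z ^ k = w"
proof (cases "w = 0")
  case False
  have "exp (Ln w / of_nat k) ^ k = exp (of_nat k * (Ln w / of_nat k))" by (rule exp_of_nat_mult[symmetric])
  also have "\<dots> = w" using assms False by simp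
  finally show ?thesis by blast
qed (use assms in auto)

context group
begin

lemma character_on_one:
  assumes "subgroup H G" "character_on G H f" shows "f \<one> = 1"
proof -
  have "f \<one> = f \<one> * f \<one>" "f \<one> \<noteq> 0"
    using assms subgroup.one_closed[OF assms(1)] unfolding character_on_def
    by (metis l_one one_closed)+
  then show ?thesis by simp
qed

lemma character_on_inv:
  assumes H: "subgroup H G" and f: "character_on G H f" and x: "x \<in> H"
  shows "f (inv x) = inverse (f x)"
proof -
  have "f x * f (inv x) = f \<one>"
    using x f H subgroup.m_inv_closed[OF H x] subgroup.mem_carrier[OF H x]
    unfolding character_on_def by (metis r_inv)
  then show ?thesis using character_on_one[OF H f] by (metis inverse_unique)
qed

lemma character_on_int_pow:
  assumes H: "subgroup H G" and f: "character_on G H f" and x: "x \<in> H"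
  shows "f (x [^] (n::int)) = f x powi n"
proof -
  have pow_in: "x [^] k \<in> H" for k :: nat
    using subgroup_int_pow_closed[OF H x, of "int k"] by (metis int_pow_int)
  have nat_pow: "f (x [^] k) = f x ^ k" for k :: nat
  proof (induction k)
    case 0 then show ?case using character_on_one[OF H f] by simp
  next
    case (Suc k)
    then show ?case using pow_in[of k] f x unfolding character_on_def by (simp add: nat_pow_Suc)
  qed
  show ?thesis
  proof (cases "n \<ge> 0")
    case True then show ?thesis
      using nat_pow[of "nat n"] by (metis int_nat_eq int_pow_int power_int_of_nat)
  next
    case False
    define m where "m = nat (- n)"
    have n: "n = - int m" using False unfolding m_def by simp
    have "f (x [^] n) = inverse (f x ^ m)"
      unfolding n using character_on_inv[OF H f pow_in] nat_pow subgroup.mem_carrier[OF H x] by (simp add: int_pow_neg_int)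
    then show ?thesis unfolding n by (simp add: power_int_minus)
  qed
qed

lemma exists_least_pow_in_subgroup:
  assumes fin: "finite (carrier G)" and H: "subgroup H G" and g: "g \<in> carrier G"
  shows "\<exists>k::nat. 0 < k \<and> g [^] k \<in> H \<and> (\<forall>j. 0 < j \<longrightarrow> j < k \<longrightarrow> g [^] j \<notin> H)"
proof -
  have "0 < order G \<and> g [^] order G \<in> H"
    using pow_order_eq_1[OF g] subgroup.one_closed[OF H] order_gt_0_iff_finite[THEN iffD2, OF fin] by simp
  then have "\<exists>k::nat. (0 < k \<and> g [^] k \<in> H) \<and> (\<forall>j<k. \<not> (0 < j \<and> g [^] j \<in> H))"
    using exists_least_iff[of "\<lambda>k::nat. 0 < k \<and> g [^] k \<in> H"] by blast
  then show ?thesis by blast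
qed

lemma subgroup_pow_dvd:
  assumes H: "subgroup H G" and g: "g \<in> carrier G" and k: "0 < k" "g [^] k \<in> H"
    and least: "\<And>j. 0 < j \<Longrightarrow> j < k \<Longrightarrow> g [^] j \<notin> H" and n: "g [^] (n::int) \<in> H"
  shows "int k dvd n"
proof -
  define s where "s = nat (n mod int k)"
  have s: "int s = n mod int k" "s < k" using k(1) unfolding s_def by (auto simp: nat_less_iff)
  have "g [^] n = (g [^] k) [^] (n div int k) \<otimes> g [^] s"
    using g s(1) by (simp add: int_pow_pow int_pow_int[symmetric] int_pow_mult[symmetric])
  then have "g [^] s = inv ((g [^] k) [^] (n div int k)) \<otimes> g [^] n"
    using g by (simp add: inv_solve_left)
  also have "\<dots> \<in> H"
    using H k(2) n by (simp add: subgroup.m_closed subgroup.m_inv_closed subgroup_int_pow_closed)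
  finally have "s = 0" using least s(2) by (metis neq0_conv)
  then show ?thesis using s(1) by (simp add: dvd_eq_mod_eq_0)
qed

lemma subset_adjoin:
  assumes "subgroup H G" shows "H \<subseteq> adjoin G H g"
proof
  fix h assume "h \<in> H"
  then have "h = h \<otimes> g [^] (0::int)" using subgroup.mem_carrier[OF assms] by simp
  then show "h \<in> adjoin G H g" unfolding adjoin_def using \<open>h \<in> H\<close> by blast
qed

lemma mem_adjoin:
  assumes "subgroup H G" "g \<in> carrier G" shows "g \<in> adjoin G H g"
  unfolding adjoin_def using assms subgroup.one_closed[OF assms(1)]
  by (intro CollectI exI[of _ \<one>] exI[of _ "1::int"]) simp

end

context comm_group
begin

lemma subgroup_adjoin:
  assumes H: "subgroup H G" and g: "g \<in> carrier G"
  shows "subgroup (adjoin G H g) G"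
proof (rule subgroupI)
  note HG = subgroup.mem_carrier[OF H]
  show "adjoin G H g \<subseteq> carrier G" using HG g by (auto simp: adjoin_def)
  show "adjoin G H g \<noteq> {}" using subset_adjoin[OF H] subgroup.one_closed[OF H] by blast
  show "inv x \<in> adjoin G H g" if "x \<in> adjoin G H g" for x
  proof -
    obtain h and i :: int where x: "h \<in> H" "x = h \<otimes> g [^] i" using \<open>x \<in> adjoin G H g\<close> unfolding adjoin_def by blast
    then have "inv x = inv h \<otimes> g [^] (- i)" using HG g by (simp add: inv_mult int_pow_neg m_comm)
    then show ?thesis using x(1) H unfolding adjoin_def by (auto simp: subgroup.m_inv_closed)
  qed
  show "x \<otimes> y \<in> adjoin G H g" if xy: "x \<in> adjoin G H g" "y \<in> adjoin G H g" for x y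
  proof -
    obtain h1 h2 and i j :: int where x: "h1 \<in> H" "x = h1 \<otimes> g [^] i" and y: "h2 \<in> H" "y = h2 \<otimes> g [^] j"
      using xy unfolding adjoin_def by blast
    have "x \<otimes> y = (h1 \<otimes> h2) \<otimes> g [^] (i + j)" using x y HG g by (simp add: int_pow_mult m_ac)
    then show ?thesis using x(1) y(1) H unfolding adjoin_def by (auto simp: subgroup.m_closed)
  qed
qed

lemma character_extend_adjoin:
  assumes H: "subgroup H G" and f: "character_on G H f" and g: "g \<in> carrier G"
    and k: "0 < k" "g [^] k \<in> H" and least: "\<And>j. 0 < j \<Longrightarrow> j < k \<Longrightarrow> g [^] j \<notin> H"
    and z: "z ^ k = f (g [^] k)"
  shows "\<exists>F. character_on G (adjoin G H g) F \<and> (\<forall>h\<in>H. F h = f h) \<and> F g = z"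
proof -
  note HG = subgroup.mem_carrier[OF H]
  have f_mult: "f (x \<otimes> y) = f x * f y" and f_nz: "f x \<noteq> 0" if "x \<in> H" "y \<in> H" for x y
    using f that unfolding character_on_def by auto
  have z_nz: "z \<noteq> 0" using z k f_nz by (metis power_0_left not_less_zero)
  have f_pow_g: "f (g [^] n) = z powi n" if gn: "g [^] (n::int) \<in> H" for n
  proof -
    obtain q where n: "n = int k * q" using subgroup_pow_dvd[OF H g k least gn] by blast
    have "f (g [^] n) = f ((g [^] k) [^] q)"
      unfolding n using g by (simp add: int_pow_pow int_pow_int[symmetric])
    also have "\<dots> = (z ^ k) powi q" using character_on_int_pow[OF H f k(2)] z by simp
    finally show ?thesis unfolding n by (simp add: power_int_mult)
  qed
  have well_defined: "f h1 * z powi i = f h2 * z powi j"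
    if h: "h1 \<in> H" "h2 \<in> H" and eq: "h1 \<otimes> g [^] i = h2 \<otimes> g [^] (j::int)" for h1 h2 i j
  proof -
    have "h2 = (h2 \<otimes> g [^] j) \<otimes> inv (g [^] j)" using h g HG by (simp add: m_assoc)
    also have "\<dots> = (h1 \<otimes> g [^] i) \<otimes> inv (g [^] j)" by (simp only: eq)
    also have "\<dots> = h1 \<otimes> (g [^] i \<otimes> inv (g [^] j))" using h g HG by (simp add: m_assoc)
    finally have "g [^] (i - j) = inv h1 \<otimes> h2"
      using h g HG by (simp add: int_pow_diff inv_solve_left)
    then have "z powi (i - j) = inverse (f h1) * f h2"
      using f_pow_g h H f_mult character_on_inv[OF H f]
      by (metis subgroup.m_closed subgroup.m_inv_closed)
    then show ?thesis using z_nz f_nz[OF h(1) h(1)]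
      by (simp add: power_int_diff field_simps)
  qed
  define F where "F y = (SOME w. \<exists>h i. h \<in> H \<and> y = h \<otimes> g [^] (i::int) \<and> w = f h * z powi i)" for y
  have F: "F (h \<otimes> g [^] i) = f h * z powi i" if "h \<in> H" for h i
  proof -
    have "\<exists>h' i'. h' \<in> H \<and> h \<otimes> g [^] i = h' \<otimes> g [^] (i'::int) \<and> F (h \<otimes> g [^] i) = f h' * z powi i'"
      unfolding F_def by (rule someI_ex) (use that in blast)
    then show ?thesis using well_defined that by metis
  qed
  show ?thesis
  proof (intro exI conjI ballI)
    show "character_on G (adjoin G H g) F"
      unfolding character_on_def
    proof (intro conjI ballI)
      fix x y assume "x \<in> adjoin G H g" "y \<in> adjoin G H g"
      then obtain h1 h2 and i j :: int
        where x: "h1 \<in> H" "x = h1 \<otimes> g [^] i" and y: "h2 \<in> H" "y = h2 \<otimes> g [^] j"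
        unfolding adjoin_def by blast
      have "x \<otimes> y = (h1 \<otimes> h2) \<otimes> g [^] (i + j)" using x y HG g by (simp add: int_pow_mult m_ac)
      then show "F (x \<otimes> y) = F x * F y"
        using x y F H z_nz f_mult by (simp add: subgroup.m_closed power_int_add)
    next
      fix x assume "x \<in> adjoin G H g"
      then show "F x \<noteq> 0" using F f_nz z_nz unfolding adjoin_def by auto
    qed
    show "F h = f h" if "h \<in> H" for h using F[OF that, of 0] HG[OF that] by simp
    show "F g = z" using F[OF subgroup.one_closed[OF H], of 1] character_on_one[OF H f] g by simp
  qed
qed

lemma character_extension:
  assumes fin: "finite (carrier G)"
  shows "subgroup H G \<Longrightarrow> character_on G H f \<Longrightarrow> \<exists>F. character_on G (carrier G) F \<and> (\<forall>h\<in>H. F h = f h)"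
proof (induction "card (carrier G - H)" arbitrary: H f rule: less_induct)
  case less
  show ?case
  proof (cases "H = carrier G")
    case True then show ?thesis by (intro exI[of _ f]) (use less.prems in auto)
  next
    case False
    then obtain g where g: "g \<in> carrier G" "g \<notin> H" using subgroup.subset[OF less.prems(1)] by blast
    obtain k :: nat where k: "0 < k" "g [^] k \<in> H" and least: "\<And>j. 0 < j \<Longrightarrow> j < k \<Longrightarrow> g [^] j \<notin> H"
      using exists_least_pow_in_subgroup[OF fin less.prems(1) g(1)] by blast
    have "f (g [^] k) \<noteq> 0" using less.prems(2) k(2) unfolding character_on_def by blast
    then obtain z where z: "z ^ k = f (g [^] k)"
      using exists_nth_root_complex[OF k(1)] by blast
    define H' where "H' = adjoin G H g"
    obtain F' where F': "character_on G H' F'" "\<forall>h\<in>H. F' h = f h"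
      using character_extend_adjoin[OF less.prems g(1) k least z] unfolding H'_def by blast
    have "H \<subseteq> H'" "g \<in> H'" unfolding H'_def using subset_adjoin mem_adjoin less.prems(1) g(1) by auto
    then have "carrier G - H' \<subset> carrier G - H" using g by blast
    then have "card (carrier G - H') < card (carrier G - H)" using fin by (intro psubset_card_mono) auto
    moreover have "subgroup H' G" unfolding H'_def by (rule subgroup_adjoin[OF less.prems(1) g(1)])
    ultimately obtain F where "character_on G (carrier G) F" "\<forall>h\<in>H'. F h = F' h"
      using less.hyps F'(1) by blast
    then show ?thesis using F'(2) \<open>H \<subseteq> H'\<close> by (intro exI[of _ F]) auto
  qed
qed

lemma separating_character:
  assumes fin: "finite (carrier G)" and x: "x \<in> carrier G" "x \<noteq> \<one>"
  shows "\<exists>F. character_on G (carrier G) F \<and> F x \<noteq> 1"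
proof -
  have triv: "character_on G {\<one>} (\<lambda>_. 1)" unfolding character_on_def by simp
  obtain k :: nat where k: "0 < k" "x [^] k \<in> {\<one>}" and least: "\<And>j. 0 < j \<Longrightarrow> j < k \<Longrightarrow> x [^] j \<notin> {\<one>}"
    using exists_least_pow_in_subgroup[OF fin triv_subgroup x(1)] by blast
  have "x [^] (1::nat) = x" using x(1) by (simp add: numeral_nat)
  then have "k \<noteq> 1" using k x by auto
  define z where "z = exp (2 * of_real pi * \<i> * of_nat 1 / of_nat k)"
  have "z ^ k = (\<lambda>_. 1) (x [^] k)" unfolding z_def using k(1) complex_root_unity[of k 1] by simp
  moreover have "z \<noteq> 1" unfolding z_def using k(1) \<open>k \<noteq> 1\<close> by (subst complex_root_unity_eq_1) auto
  ultimately obtain F' where F': "character_on G (adjoin G {\<one>} x) F'" "F' x = z"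
    using character_extend_adjoin[OF triv_subgroup triv x(1) k(1,2) least] by blast
  obtain F where F: "character_on G (carrier G) F" "\<forall>h\<in>adjoin G {\<one>} x. F h = F' h"
    using character_extension[OF fin subgroup_adjoin[OF triv_subgroup x(1)] F'(1)] by blast
  have "x \<in> adjoin G {\<one>} x" using mem_adjoin[OF triv_subgroup x(1)] .
  then show ?thesis using F F' \<open>z \<noteq> 1\<close> by (intro exI[of _ F]) auto
qed

lemma character_pow_order:
  assumes "character_on G (carrier G) f" "y \<in> carrier G"
  shows "f y ^ order G = 1"
  using character_on_int_pow[OF subgroup_self assms, of "int (order G)"]
    character_on_one[OF subgroup_self assms(1)] pow_order_eq_1[OF assms(2)]
  by (simp add: int_pow_int)

lemma character_norm:
  assumes fin: "finite (carrier G)" and "character_on G (carrier G) f" "y \<in> carrier G"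
  shows "norm (f y) = 1"
  using power_eq_1_iff[OF character_pow_order[OF assms(2,3)]] order_gt_0_iff_finite fin by simp

lemma finite_characters:
  assumes fin: "finite (carrier G)" shows "finite (characters G)"
proof (rule finite_subset)
  show "characters G \<subseteq> PiE (carrier G) (\<lambda>_. {z. z ^ order G = 1})"
    unfolding characters_def using character_pow_order by (auto simp: PiE_def Pi_def)
  show "finite (PiE (carrier G) (\<lambda>_. {z::complex. z ^ order G = 1}))"
    using fin order_gt_0_iff_finite by (intro finite_PiE finite_roots_unity) auto
qed

lemma card_characters_pos:
  assumes fin: "finite (carrier G)" shows "card (characters G) > 0"
proof -
  have "restrict (\<lambda>_. 1) (carrier G) \<in> characters G" unfolding characters_def character_on_def by auto
  then show ?thesis using finite_characters[OF fin] card_gt_0_iff by blast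
qed

lemma sum_characters_eq_0:
  assumes fin: "finite (carrier G)" and x: "x \<in> carrier G" "x \<noteq> \<one>"
  shows "(\<Sum>f\<in>characters G. f x) = 0"
proof -
  obtain f0 where f0: "character_on G (carrier G) f0" "f0 x \<noteq> 1"
    using separating_character[OF fin x] by blast
  have f0_nz: "f0 y \<noteq> 0" if "y \<in> carrier G" for y using f0(1) that unfolding character_on_def by blast
  \<comment> \<open>multiplication by f0 permutes the characters\<close>
  have "(\<Sum>f\<in>characters G. f0 x * f x) = (\<Sum>f\<in>characters G. f x)"
  proof (rule sum.reindex_bij_witness[where i = "\<lambda>f. restrict (\<lambda>y. f y / f0 y) (carrier G)"
        and j = "\<lambda>f. restrict (\<lambda>y. f0 y * f y) (carrier G)"])
    fix f assume f: "f \<in> characters G"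
    then show "restrict (\<lambda>y. f0 y * f y) (carrier G) \<in> characters G"
      using f0(1) unfolding characters_def character_on_def by auto
    show "restrict (\<lambda>y. restrict (\<lambda>y. f0 y * f y) (carrier G) y / f0 y) (carrier G) = f"
      using f f0_nz unfolding characters_def by (auto simp: fun_eq_iff extensional_def)
    show "restrict (\<lambda>y. f0 y * f y) (carrier G) x = f0 x * f x" using x by simp
  next
    fix f assume f: "f \<in> characters G"
    then show "restrict (\<lambda>y. f y / f0 y) (carrier G) \<in> characters G"
      using f0(1) f0_nz unfolding characters_def character_on_def by auto
    show "restrict (\<lambda>y. f0 y * restrict (\<lambda>y. f y / f0 y) (carrier G) y) (carrier G) = f"
      using f f0_nz unfolding characters_def by (auto simp: fun_eq_iff extensional_def)
  qed
  then have "f0 x * (\<Sum>f\<in>characters G. f x) = (\<Sum>f\<in>characters G. f x)" by (simp add: sum_distrib_left)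
  then have "(f0 x - 1) * (\<Sum>f\<in>characters G. f x) = 0" by (simp add: algebra_simps)
  then show ?thesis using f0(2) by simp
qed

lemma characters_orthogonality:
  assumes fin: "finite (carrier G)" and m: "m \<in> carrier G" and n: "n \<in> carrier G"
  shows "(\<Sum>f\<in>characters G. f m * cnj (f n)) = (if m = n then of_nat (card (characters G)) else 0)"
proof -
  have cnj_eq: "cnj (f y) = f (inv y)" if f: "character_on G (carrier G) f" and y: "y \<in> carrier G" for f y
  proof -
    have "f y * cnj (f y) = 1" using complex_norm_square[of "f y"] character_norm[OF fin f y] by simp
    then show ?thesis using character_on_inv[OF subgroup_self f y] by (simp add: inverse_unique)
  qed
  have "f m * cnj (f n) = f (m \<otimes> inv n)" if "f \<in> characters G" for f
    using that cnj_eq m n unfolding characters_def character_on_def by auto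
  then have "(\<Sum>f\<in>characters G. f m * cnj (f n)) = (\<Sum>f\<in>characters G. f (m \<otimes> inv n))" by simp
  also have "\<dots> = (if m = n then of_nat (card (characters G)) else 0)"
  proof (cases "m = n")
    case True
    have "f (m \<otimes> inv n) = 1" if "f \<in> characters G" for f
      using that character_on_one[OF subgroup_self] True n unfolding characters_def by auto
    then have "(\<Sum>f\<in>characters G. f (m \<otimes> inv n)) = (\<Sum>f\<in>characters G. 1)" by (rule sum.cong[OF refl])
    then show ?thesis using True by simp
  next
    case False
    then have "m \<otimes> inv n \<noteq> \<one>" using m n by (metis inv_closed inv_equality inv_inv m_comm)
    then show ?thesis using sum_characters_eq_0[OF fin] m n False by simp
  qed
  finally show ?thesis .
qed

end

section \<open>Dirichlet characters induced from the units modulo r\<close>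

text \<open>(Z/rZ)* represented by residues in [0, r); for r = 1 it is the trivial group {0}.\<close>

definition units_mod :: "nat \<Rightarrow> nat monoid" where
  "units_mod r = \<lparr>carrier = {x. x < r \<and> coprime x r}, monoid.mult = (\<lambda>x y. x * y mod r), one = 1 mod r\<rparr>"

lemma comm_group_units_mod:
  assumes r: "r \<ge> 1" shows "comm_group (units_mod r)"
proof (rule comm_groupI)
  show "x \<otimes>\<^bsub>units_mod r\<^esub> y \<in> carrier (units_mod r)"
    if "x \<in> carrier (units_mod r)" "y \<in> carrier (units_mod r)" for x y
    using that r by (auto simp: units_mod_def)
  show "\<one>\<^bsub>units_mod r\<^esub> \<in> carrier (units_mod r)" using r by (auto simp: units_mod_def)
  show "x \<otimes>\<^bsub>units_mod r\<^esub> y \<otimes>\<^bsub>units_mod r\<^esub> z = x \<otimes>\<^bsub>units_mod r\<^esub> (y \<otimes>\<^bsub>units_mod r\<^esub> z)" for x y z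
    by (simp add: units_mod_def mod_mult_left_eq mod_mult_right_eq mult.assoc)
  show "x \<otimes>\<^bsub>units_mod r\<^esub> y = y \<otimes>\<^bsub>units_mod r\<^esub> x" for x y by (simp add: units_mod_def mult.commute)
  show "\<one>\<^bsub>units_mod r\<^esub> \<otimes>\<^bsub>units_mod r\<^esub> x = x" if "x \<in> carrier (units_mod r)" for x
    using that by (simp add: units_mod_def mod_mult_left_eq)
  show "\<exists>y\<in>carrier (units_mod r). y \<otimes>\<^bsub>units_mod r\<^esub> x = \<one>\<^bsub>units_mod r\<^esub>"
    if x: "x \<in> carrier (units_mod r)" for x
  proof -
    have cx: "coprime x r" using x by (simp add: units_mod_def)
    define y where "y = x ^ (totient r - 1) mod r"
    have "y * x mod r = x ^ totient r mod r"
      using r by (simp add: y_def mod_mult_left_eq power_Suc2[symmetric])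
    also have "\<dots> = 1 mod r" using euler_theorem[OF cx] by (simp add: cong_def)
    finally show ?thesis using r cx by (intro bexI[of _ y]) (auto simp: units_mod_def y_def)
  qed
qed

lemma finite_units_mod: "finite (carrier (units_mod r))"
  by (simp add: units_mod_def)

lemma mod_in_units_mod:
  assumes "r \<ge> 1" "r dvd q" "coprime n q" shows "n mod r \<in> carrier (units_mod r)"
  using assms coprime_divisors[OF dvd_refl \<open>r dvd q\<close> \<open>coprime n q\<close>] by (simp add: units_mod_def)

definition dirichlet_lift :: "nat \<Rightarrow> nat \<Rightarrow> (nat \<Rightarrow> complex) \<Rightarrow> nat \<Rightarrow> complex" where
  "dirichlet_lift q r f n = (if coprime n q then f (n mod r) else 0)"

lemma dirichlet_char_lift:
  assumes r: "r \<ge> 1" and q: "q \<ge> 1" and rq: "r dvd q" and f: "f \<in> characters (units_mod r)"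
  shows "dirichlet_char q (dirichlet_lift q r f)"
  unfolding dirichlet_char_def
proof (intro conjI allI)
  have f: "character_on (units_mod r) (carrier (units_mod r)) f" using f unfolding characters_def by blast
  note units = mod_in_units_mod[OF r rq]
  show "1 \<le> q" by (rule q)
  show "dirichlet_lift q r f (m * n) = dirichlet_lift q r f m * dirichlet_lift q r f n" for m n
  proof (cases "coprime m q \<and> coprime n q")
    case True
    have "(m * n) mod r = (m mod r) \<otimes>\<^bsub>units_mod r\<^esub> (n mod r)" by (simp add: units_mod_def mod_mult_eq)
    then show ?thesis using True units f unfolding dirichlet_lift_def character_on_def by auto
  qed (auto simp: dirichlet_lift_def)
  show "dirichlet_lift q r f (n + q) = dirichlet_lift q r f n" for n
  proof -
    have "(n + q) mod r = n mod r" using rq by (auto elim: dvdE)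
    moreover have "coprime (n + q) q = coprime n q" by (simp only: coprime_iff_gcd_eq_1 gcd_add1)
    ultimately show ?thesis unfolding dirichlet_lift_def by simp
  qed
  show "dirichlet_lift q r f n = 0 \<longleftrightarrow> \<not> coprime n q" for n
    using units f unfolding dirichlet_lift_def character_on_def by auto
qed

lemma dirichlet_char_cnj: "dirichlet_char q \<psi> \<Longrightarrow> dirichlet_char q (\<lambda>n. cnj (\<psi> n))"
  unfolding dirichlet_char_def by auto

lemma conductor_le:
  assumes "dirichlet_char q \<psi>" shows "conductor q \<psi> \<le> q"
proof -
  have "induced_mod q q \<psi>" unfolding induced_mod_def using assms by auto
  then show ?thesis using assms unfolding conductor_def dirichlet_char_def by (intro Least_le) simp
qed

lemma dirichlet_lift_orthogonality:
  assumes r: "r \<ge> 1" and rq: "r dvd q"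
  shows "(\<Sum>f\<in>characters (units_mod r). dirichlet_lift q r f m * cnj (dirichlet_lift q r f n)) =
    of_nat (card (characters (units_mod r))) *
      (if coprime m q \<and> coprime n q \<and> int r dvd (int m - int n) then 1 else 0)"
proof (cases "coprime m q \<and> coprime n q")
  case True
  have "(m mod r = n mod r) \<longleftrightarrow> int r dvd (int m - int n)"
    by (metis mod_eq_dvd_iff of_nat_eq_iff zmod_int)
  then show ?thesis
    using True comm_group.characters_orthogonality[OF comm_group_units_mod[OF r] finite_units_mod,
        OF mod_in_units_mod[OF r rq] mod_in_units_mod[OF r rq]]
    unfolding dirichlet_lift_def by simp
qed (auto simp: dirichlet_lift_def)

lemma congruence_bilinear_bound:
  fixes a b :: "nat \<Rightarrow> complex" and S :: "nat set"
  assumes S: "finite S" and r: "r \<ge> 1" and q: "q \<ge> 1" and rq: "r dvd q"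
    and twisted: "\<And>\<psi>. dirichlet_char q \<psi> \<Longrightarrow>
        norm (\<Sum>m\<in>S. a m * \<psi> m) \<le> R \<and> norm (\<Sum>n\<in>S. b n * \<psi> n) \<le> R"
  shows "norm (\<Sum>(m, n)\<in>S \<times> S. a m * b n *
           (if coprime q (m * n) \<and> int r dvd (int m - int n) then 1 else 0)) \<le> R\<^sup>2"
proof -
  define X where "X = characters (units_mod r)"
  define lift where "lift = dirichlet_lift q r"
  have X: "finite X" "card X > 0"
    unfolding X_def using comm_group_units_mod[OF r] finite_units_mod
    by (auto intro: comm_group.finite_characters comm_group.card_characters_pos)
  have indicator: "(if coprime q (m * n) \<and> int r dvd (int m - int n) then 1 else 0)
      = (\<Sum>f\<in>X. lift f m * cnj (lift f n)) / of_nat (card X)" for m n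
    using dirichlet_lift_orthogonality[OF r rq, of m n] X(2)
    unfolding X_def lift_def by (simp add: coprime_commute)
  have "(\<Sum>(m, n)\<in>S \<times> S. a m * b n * (if coprime q (m * n) \<and> int r dvd (int m - int n) then 1 else 0))
      = (\<Sum>(m, n)\<in>S \<times> S. \<Sum>f\<in>X. (a m * lift f m) * (b n * cnj (lift f n))) / of_nat (card X)"
    unfolding indicator by (simp add: sum_divide_distrib sum_distrib_left mult_ac case_prod_beta)
  also have "\<dots> = (\<Sum>f\<in>X. \<Sum>(m, n)\<in>S \<times> S. (a m * lift f m) * (b n * cnj (lift f n))) / of_nat (card X)"
    by (subst sum.swap) (simp add: case_prod_beta)
  also have "\<dots> = (\<Sum>f\<in>X. (\<Sum>m\<in>S. a m * lift f m) * (\<Sum>n\<in>S. b n * cnj (lift f n))) / of_nat (card X)"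
    by (simp add: sum_product sum.cartesian_product)
  also have "norm \<dots> \<le> (\<Sum>f\<in>X. R * R) / of_nat (card X)"
    unfolding norm_divide norm_of_nat
  proof (intro divide_right_mono order_trans[OF norm_sum sum_mono])
    fix f assume "f \<in> X"
    then have "dirichlet_char q (lift f)" unfolding X_def lift_def by (rule dirichlet_char_lift[OF r q rq])
    then have A: "norm (\<Sum>m\<in>S. a m * lift f m) \<le> R" and B: "norm (\<Sum>n\<in>S. b n * cnj (lift f n)) \<le> R"
      using twisted dirichlet_char_cnj by blast+
    show "norm ((\<Sum>m\<in>S. a m * lift f m) * (\<Sum>n\<in>S. b n * cnj (lift f n))) \<le> R * R"
      unfolding norm_mult using A B by (intro mult_mono) (auto intro: order_trans[OF norm_ge_zero])
  qed simp
  also have "\<dots> = R\<^sup>2" using X(2) by (simp add: power2_eq_square)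
  finally show ?thesis .
qed

section \<open>Elementary estimates\<close>

lemma harmonic_sum_le:
  assumes "N \<ge> 1" shows "(\<Sum>m\<in>{1..N}. 1 / real m) \<le> 1 + ln (real N)"
  using euler_mascheroni_sequence_decreasing[of 1 N] assms by (simp add: harm_def divide_inverse)

lemma sum_inverse_square_le:
  fixes S :: "nat set"
  assumes S: "finite S" and x: "x > 0" and ge: "\<And>c. c \<in> S \<Longrightarrow> real c \<ge> x"
  shows "(\<Sum>c\<in>S. 1 / (real c)\<^sup>2) \<le> 2 / x"
proof -
  define c0 where "c0 = nat \<lceil>x\<rceil>"
  define k where "k = Suc (Max (insert 0 S))"
  have c0: "real c0 \<ge> x" "c0 \<ge> 1" unfolding c0_def using x by linarith+
  have step: "1 / (real c)\<^sup>2 \<le> 2 / real c - 2 / real (Suc c)" if "c \<ge> 1" for c :: nat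
  proof -
    have "1 / (real c)\<^sup>2 = 2 / (2 * real c * real c)" by (simp add: power2_eq_square)
    also have "\<dots> \<le> 2 / (real c * (real c + 1))"
      using that by (intro frac_le) (auto simp: algebra_simps add_pos_nonneg)
    also have "\<dots> = 2 / real c - 2 / real (Suc c)" using that by (simp add: field_simps)
    finally show ?thesis .
  qed
  have "S \<subseteq> {c0..<k}"
  proof
    fix c assume c: "c \<in> S"
    then have "c \<le> Max (insert 0 S)" using S by simp
    then show "c \<in> {c0..<k}" using ge[OF c] unfolding k_def c0_def by (simp add: nat_le_iff ceiling_le_iff)
  qed
  then have "(\<Sum>c\<in>S. 1 / (real c)\<^sup>2) \<le> (\<Sum>c\<in>{c0..<k}. 1 / (real c)\<^sup>2)"
    by (intro sum_mono2) auto
  also have "\<dots> \<le> (\<Sum>c\<in>{c0..<k}. 2 / real c - 2 / real (Suc c))"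
    using c0 by (intro sum_mono step) auto
  also have "\<dots> \<le> 2 / real c0"
    by (cases "c0 \<le> k") (simp_all add: sum_Suc_diff'[where f = "\<lambda>c. - 2 / real c", simplified])
  also have "\<dots> \<le> 2 / x" using c0 x by (simp add: frac_le)
  finally show ?thesis .
qed

lemma prod_prime_factors_le:
  fixes n :: nat assumes "n \<noteq> 0" shows "(\<Prod>p\<in>prime_factors n. p) \<le> n"
proof (rule dvd_imp_le)
  have "(\<Prod>p\<in>prime_factors n. p) dvd (\<Prod>p\<in>prime_factors n. p ^ multiplicity p n)"
    by (intro prod_dvd_prod dvd_power) (auto simp: prime_factors_multiplicity)
  then show "(\<Prod>p\<in>prime_factors n. p) dvd n" using prod_prime_factors[OF assms] by simp
qed (use assms in simp)

lemma one_minus_inverse_prime_ge: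
  assumes p: "prime p" and \<eta>: "\<eta> > 0"
  shows "1 / ((if real p < 2 powr (1 / \<eta>) then 2 else 1) * real p powr \<eta>) \<le> 1 - 1 / real p"
proof -
  have p2: "real p \<ge> 2" using prime_ge_2_nat[OF p] by simp
  \<comment> \<open>large primes have p powr \<eta> \<ge> 2, small ones get the factor 2 instead\<close>
  have "(if real p < 2 powr (1 / \<eta>) then 2 else 1) * real p powr \<eta> \<ge> 2"
  proof (cases "real p < 2 powr (1 / \<eta>)")
    case True then show ?thesis using p2 \<eta> ge_one_powr_ge_zero[of "real p" \<eta>] by simp
  next
    case False
    then have "real p powr \<eta> \<ge> (2 powr (1 / \<eta>)) powr \<eta>" using \<eta> by (intro powr_mono2) auto
    then show ?thesis using False \<eta> by (simp add: powr_powr)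
  qed
  then have "1 / ((if real p < 2 powr (1 / \<eta>) then 2 else 1) * real p powr \<eta>) \<le> 1 / 2"
    by (intro frac_le) auto
  also have "\<dots> \<le> 1 - 1 / real p" using p2 by (simp add: field_simps)
  finally show ?thesis .
qed

lemma totient_lower_bound:
  assumes \<eta>: "\<eta> > 0"
  obtains K where "K > 0" "\<And>n. n \<ge> 1 \<Longrightarrow> real n \<le> K * real (totient n) * real n powr \<eta>"
proof
  define T where "T = (2::real) powr (1 / \<eta>)"
  define K where "K = (2::real) ^ nat \<lceil>T\<rceil>"
  show "K > 0" unfolding K_def by simp
  fix n :: nat assume n: "n \<ge> 1"
  define P where "P = prime_factors n"
  define c where "c p = (if real p < T then (2::real) else 1)" for p :: nat
  have P: "finite P" "\<And>p. p \<in> P \<Longrightarrow> prime p" unfolding P_def by auto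
  have "(\<Prod>p\<in>P. c p) = 2 ^ card {p\<in>P. real p < T}"
    unfolding c_def using P(1) by (simp add: prod.If_cases Int_def)
  also have "\<dots> \<le> K"
  proof -
    have "{p\<in>P. real p < T} \<subseteq> {..<nat \<lceil>T\<rceil>}" by (auto simp: zless_nat_eq_int_zless less_ceiling_iff)
    then show ?thesis unfolding K_def by (intro power_increasing) (auto dest: card_mono[rotated])
  qed
  finally have cK: "(\<Prod>p\<in>P. c p) \<le> K" .
  have Pn: "(\<Prod>p\<in>P. real p) powr \<eta> \<le> real n powr \<eta>"
    using prod_prime_factors_le[of n] n \<eta> unfolding P_def
    by (intro powr_mono2) (auto simp flip: of_nat_prod)
  have "(\<Prod>p\<in>P. real p) > 0" using P(2) prime_gt_0_nat by (intro prod_pos) auto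
  then have "1 / (K * real n powr \<eta>) \<le> 1 / ((\<Prod>p\<in>P. c p) * (\<Prod>p\<in>P. real p) powr \<eta>)"
    using cK Pn \<open>K > 0\<close> by (intro frac_le mult_mono mult_pos_pos prod_pos) (auto simp: c_def)
  also have "\<dots> = (\<Prod>p\<in>P. 1 / (c p * real p powr \<eta>))"
    using P(2) prime_gt_0_nat by (simp add: prod_dividef prod.distrib prod_powr_distrib)
  also have "\<dots> \<le> (\<Prod>p\<in>P. 1 - 1 / real p)"
    using one_minus_inverse_prime_ge[OF P(2) \<eta>] unfolding c_def T_def
    by (intro prod_mono) (auto simp: c_def)
  also have "\<dots> = real (totient n) / real n" using n unfolding P_def by (simp add: totient_formula2)
  finally show "real n \<le> K * real (totient n) * real n powr \<eta>"
    using n \<open>K > 0\<close> by (simp add: field_simps)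
qed

lemma inverse_mult_totient_le:
  assumes tot: "\<And>n. n \<ge> 1 \<Longrightarrow> real n \<le> K * real (totient n) * real n powr \<eta>"
    and K: "K \<ge> 0" and \<eta>: "\<eta> \<ge> 0" and a: "a \<ge> 1" and c: "c \<ge> 1" and Y: "real (a * c) \<le> Y"
  shows "1 / (real a * real (totient (a * c))) \<le> K * Y powr \<eta> / ((real a)\<^sup>2 * real c)"
proof -
  have ac: "a * c \<ge> 1" using a c by simp
  have "real (a * c) \<le> K * real (totient (a * c)) * real (a * c) powr \<eta>" by (rule tot[OF ac])
  also have "\<dots> \<le> K * real (totient (a * c)) * Y powr \<eta>"
    using K \<eta> Y by (intro mult_left_mono powr_mono2) auto
  finally show ?thesis using a c ac by (simp add: field_simps power2_eq_square)
qed

lemma card_multiples_le: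
  assumes "A \<ge> 1" "y \<ge> 0"
  shows "real (card {d\<in>{1..N}. real (A * d) \<le> y}) \<le> y / real A"
proof -
  have "{d\<in>{1..N}. real (A * d) \<le> y} \<subseteq> {1..nat \<lfloor>y / real A\<rfloor>}"
    using assms by (auto simp: field_simps le_nat_floor)
  then have "card {d\<in>{1..N}. real (A * d) \<le> y} \<le> nat \<lfloor>y / real A\<rfloor>"
    using card_mono[of "{1..nat \<lfloor>y / real A\<rfloor>}"] by fastforce
  then have "real (card {d\<in>{1..N}. real (A * d) \<le> y}) \<le> real (nat \<lfloor>y / real A\<rfloor>)" by simp
  also have "\<dots> \<le> y / real A" using assms by simp
  finally show ?thesis .
qed

lemma weight_sum_le:
  fixes Q C A :: real and N :: nat
  assumes Q: "Q \<ge> 0" and C: "C > 0" and A: "A \<ge> 0"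
  shows "(\<Sum>(a, c, d)\<in>{1..N} \<times> {1..N} \<times> {1..N}.
            if C < real c \<and> real (a\<^sup>2 * c * d) \<le> Q then A / ((real a)\<^sup>2 * real c) else 0)
         \<le> 4 * A * Q / C"
proof -
  have inner: "(\<Sum>d\<in>{1..N}. if C < real c \<and> real (a\<^sup>2 * c * d) \<le> Q then A / ((real a)\<^sup>2 * real c) else 0)
      \<le> (if C < real c then A * Q * (1 / (real a)\<^sup>2) * (1 / (real c)\<^sup>2) else 0)"
    if a: "a \<ge> 1" and c: "c \<ge> 1" for a c :: nat
  proof (cases "C < real c")
    case True
    have "(\<Sum>d\<in>{1..N}. if C < real c \<and> real (a\<^sup>2 * c * d) \<le> Q then A / ((real a)\<^sup>2 * real c) else 0)
        = real (card {d\<in>{1..N}. real (a\<^sup>2 * c * d) \<le> Q}) * (A / ((real a)\<^sup>2 * real c))"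
      using True by (simp add: sum.If_cases Int_def mult.assoc)
    also have "\<dots> \<le> Q / real (a\<^sup>2 * c) * (A / ((real a)\<^sup>2 * real c))"
      using card_multiples_le[of "a\<^sup>2 * c" Q N] a c Q A by (intro mult_right_mono) (auto simp: mult.assoc)
    also have "\<dots> \<le> A * Q * (1 / (real a)\<^sup>2) * (1 / (real c)\<^sup>2)"
    proof -
      have "1 \<le> (real a)\<^sup>2" using a by simp
      then have "(real a)\<^sup>2 * 1 \<le> (real a)\<^sup>2 * (real a)\<^sup>2" by (intro mult_left_mono) auto
      then have "1 / ((real a)\<^sup>2 * (real a)\<^sup>2) \<le> 1 / (real a)\<^sup>2"
        using a by (intro divide_left_mono) auto
      then have "A * Q * (1 / ((real a)\<^sup>2 * (real a)\<^sup>2)) * (1 / (real c)\<^sup>2)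
          \<le> A * Q * (1 / (real a)\<^sup>2) * (1 / (real c)\<^sup>2)"
        using A Q by (intro mult_right_mono mult_left_mono) auto
      then show ?thesis by (simp add: power2_eq_square mult_ac)
    qed
    finally show ?thesis using True by simp
  qed simp
  have "(\<Sum>(a, c, d)\<in>{1..N} \<times> {1..N} \<times> {1..N}.
            if C < real c \<and> real (a\<^sup>2 * c * d) \<le> Q then A / ((real a)\<^sup>2 * real c) else 0)
      \<le> (\<Sum>a\<in>{1..N}. \<Sum>c\<in>{1..N}. if C < real c then A * Q * (1 / (real a)\<^sup>2) * (1 / (real c)\<^sup>2) else 0)"
    unfolding sum.cartesian_product[symmetric] by (intro sum_mono inner) auto
  also have "\<dots> = (\<Sum>a\<in>{1..N}. A * Q * (1 / (real a)\<^sup>2) * (\<Sum>c\<in>{c\<in>{1..N}. C < real c}. 1 / (real c)\<^sup>2))"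
    by (intro sum.cong refl) (simp only: sum.inter_filter[symmetric, OF finite_atLeastAtMost] sum_distrib_left)
  also have "\<dots> = A * Q * (\<Sum>a\<in>{1..N}. 1 / (real a)\<^sup>2) * (\<Sum>c\<in>{c\<in>{1..N}. C < real c}. 1 / (real c)\<^sup>2)"
    by (simp only: sum_distrib_right[symmetric] sum_distrib_left[symmetric])
  also have "\<dots> \<le> A * Q * 2 * (2 / C)"
    using A Q C sum_inverse_square_le[of "{1..N}" 1]
    by (intro mult_mono mult_left_mono sum_inverse_square_le) (auto intro: sum_nonneg)
  finally show ?thesis by simp
qed

lemma smooth_compact_support_bounded:
  assumes "smooth_fun W" and "\<forall>x. x \<notin> {1..2} \<longrightarrow> W x = 0"
  obtains Wm where "Wm \<ge> 0" "\<And>x. \<bar>W x\<bar> \<le> Wm"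
proof -
  have "W differentiable (at x)" for x using assms(1) unfolding smooth_fun_def by (metis funpow_0)
  then have "continuous_on {1..2} W"
    by (intro differentiable_imp_continuous_on differentiable_at_imp_differentiable_on) auto
  then have "bounded (W ` {1..2})" by (intro compact_imp_bounded compact_continuous_image) auto
  then obtain c where c: "\<forall>y\<in>W ` {1..2}. \<bar>y\<bar> \<le> c" unfolding bounded_real by blast
  have "\<bar>W x\<bar> \<le> max c 0" for x
    using c assms(2) by (cases "x \<in> {1..2}") (auto, force)
  then show ?thesis using that[of "max c 0"] by simp
qed

lemma nat_le_real_eq_atLeastAtMost: "{m::nat. 1 \<le> m \<and> real m \<le> X} = {1..nat \<lfloor>X\<rfloor>}"
proof -
  have "1 \<le> m \<and> real m \<le> X \<longleftrightarrow> m \<in> {1..nat \<lfloor>X\<rfloor>}" for m :: nat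
  proof
    assume "1 \<le> m \<and> real m \<le> X" then show "m \<in> {1..nat \<lfloor>X\<rfloor>}" by (auto simp: le_nat_floor)
  next
    assume "m \<in> {1..nat \<lfloor>X\<rfloor>}"
    then have "1 \<le> m" "int m \<le> \<lfloor>X\<rfloor>" by auto
    then show "1 \<le> m \<and> real m \<le> X" by (simp add: le_floor_iff)
  qed
  then show ?thesis by blast
qed

lemma factors_le_weight:
  fixes a c d :: nat assumes "a \<ge> 1" "c \<ge> 1" "d \<ge> 1"
  shows "a \<le> a\<^sup>2 * c * d" "c \<le> a\<^sup>2 * c * d" "d \<le> a\<^sup>2 * c * d" "a * c \<le> a\<^sup>2 * c * d"
    "a * c * d \<le> a\<^sup>2 * c * d"
proof -
  have le_mult: "x \<le> x * y" if "y \<ge> 1" for x y :: nat using that by simp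
  have "a\<^sup>2 * c * d = a * (a * c * d)" "a\<^sup>2 * c * d = c * (a * a * d)" "a\<^sup>2 * c * d = d * (a * a * c)"
    "a\<^sup>2 * c * d = (a * c) * (a * d)" "a\<^sup>2 * c * d = (a * c * d) * a"
    by (simp_all add: power2_eq_square mult_ac)
  note eq = this
  show "a \<le> a\<^sup>2 * c * d" unfolding eq(1) using assms by (intro le_mult) simp
  show "c \<le> a\<^sup>2 * c * d" unfolding eq(2) using assms by (intro le_mult) simp
  show "d \<le> a\<^sup>2 * c * d" unfolding eq(3) using assms by (intro le_mult) simp
  show "a * c \<le> a\<^sup>2 * c * d" unfolding eq(4) using assms by (intro le_mult) simp
  show "a * c * d \<le> a\<^sup>2 * c * d" unfolding eq(5) using assms by (intro le_mult)
qed

section \<open>The bilinear sum U_E\<close>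

lemma sum_off_diagonal:
  fixes f :: "nat \<times> nat \<Rightarrow> 'a::ab_group_add"
  assumes S: "finite S"
  shows "(\<Sum>p\<in>{(m, n). m \<in> S \<and> n \<in> S \<and> m \<noteq> n}. f p) = (\<Sum>p\<in>S \<times> S. f p) - (\<Sum>m\<in>S. f (m, m))"
proof -
  have "(\<Sum>p\<in>S \<times> S. f p) = (\<Sum>p\<in>S \<times> S. if fst p \<noteq> snd p then f p else 0) + (\<Sum>p\<in>S \<times> S. if fst p = snd p then f p else 0)"
    by (subst sum.distrib[symmetric]) (rule sum.cong, auto)
  also have "(\<Sum>p\<in>S \<times> S. if fst p \<noteq> snd p then f p else 0) = (\<Sum>p\<in>{(m, n). m \<in> S \<and> n \<in> S \<and> m \<noteq> n}. f p)"
    using S by (subst sum.inter_filter[symmetric]) (auto intro: sum.cong)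
  also have "(\<Sum>p\<in>S \<times> S. if fst p = snd p then f p else 0) = (\<Sum>m\<in>S. \<Sum>n\<in>S. if m = n then f (m, n) else 0)"
    unfolding sum.cartesian_product by (auto intro!: sum.cong)
  also have "\<dots> = (\<Sum>m\<in>S. f (m, m))" using S by (simp add: sum.delta)
  finally show ?thesis by simp
qed

lemma diagonal_sum_bound:
  fixes a b :: "nat \<Rightarrow> complex"
  assumes S: "\<And>m. m \<in> S \<Longrightarrow> m \<ge> 1" and R: "R \<ge> 0"
    and pointwise: "\<And>m. m \<in> S \<Longrightarrow> norm (a m) \<le> R * real m powr (-1/2) \<and> norm (b m) \<le> R * real m powr (-1/2)"
  shows "norm (\<Sum>m\<in>S. a m * b m * (if P m then 1 else 0)) \<le> R\<^sup>2 * (\<Sum>m\<in>S. 1 / real m)"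
proof -
  have "norm (a m * b m * (if P m then 1 else 0)) \<le> R\<^sup>2 * (1 / real m)" if m: "m \<in> S" for m
  proof -
    have "norm (a m * b m * (if P m then 1 else 0)) \<le> norm (a m) * norm (b m)" by (simp add: norm_mult)
    also have "\<dots> \<le> (R * real m powr (-1/2)) * (R * real m powr (-1/2))"
      using pointwise[OF m] R by (intro mult_mono) auto
    also have "\<dots> = R\<^sup>2 * (1 / real m)"
      using S[OF m] by (simp add: power2_eq_square mult_ac powr_add[symmetric] powr_minus_divide)
    finally show ?thesis .
  qed
  then have "norm (\<Sum>m\<in>S. a m * b m * (if P m then 1 else 0)) \<le> (\<Sum>m\<in>S. R\<^sup>2 * (1 / real m))"
    by (intro order_trans[OF norm_sum sum_mono])
  then show ?thesis by (simp add: sum_distrib_left)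
qed

lemma off_diagonal_congruence_bound:
  fixes a b :: "nat \<Rightarrow> complex"
  assumes S: "finite S" "\<And>m. m \<in> S \<Longrightarrow> m \<ge> 1" and R: "R \<ge> 0"
    and qr: "r \<ge> 1" "q \<ge> 1" "r dvd q"
    and pointwise: "\<And>m. m \<in> S \<Longrightarrow> norm (a m) \<le> R * real m powr (-1/2) \<and> norm (b m) \<le> R * real m powr (-1/2)"
    and twisted: "\<And>\<psi>. dirichlet_char q \<psi> \<Longrightarrow>
        norm (\<Sum>m\<in>S. a m * \<psi> m) \<le> R \<and> norm (\<Sum>n\<in>S. b n * \<psi> n) \<le> R"
  shows "norm (\<Sum>(m, n)\<in>{(m, n). m \<in> S \<and> n \<in> S \<and> m \<noteq> n}. a m * b n *
           (if coprime q (m * n) \<and> int r dvd (int m - int n) then 1 else 0))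
         \<le> R\<^sup>2 * (1 + (\<Sum>m\<in>S. 1 / real m))"
proof -
  define f where "f = (\<lambda>(m, n). a m * b n * (if coprime q (m * n) \<and> int r dvd (int m - int n) then 1 else (0::complex)))"
  have "norm (\<Sum>p\<in>{(m, n). m \<in> S \<and> n \<in> S \<and> m \<noteq> n}. f p) \<le> norm (\<Sum>p\<in>S \<times> S. f p) + norm (\<Sum>m\<in>S. f (m, m))"
    unfolding sum_off_diagonal[OF S(1)] by (rule norm_triangle_ineq4)
  also have "\<dots> \<le> R\<^sup>2 + R\<^sup>2 * (\<Sum>m\<in>S. 1 / real m)"
    using congruence_bilinear_bound[OF S(1) qr twisted] diagonal_sum_bound[OF S(2) R pointwise]
    unfolding f_def by (intro add_mono) (simp_all add: case_prod_beta)
  finally show ?thesis unfolding f_def by (simp add: algebra_simps)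
qed

definition U_summand :: "(real \<Rightarrow> real) \<Rightarrow> real \<Rightarrow> nat \<times> nat \<times> nat \<Rightarrow> real" where
  "U_summand W Q = (\<lambda>(a, c, d). W (real (a^2 * c * d) / Q) * real_of_int (moebius_mu a)
     * real_of_int (moebius_mu (a * c)) / (real a * real (totient (a * c))))"

definition U_index :: "real \<Rightarrow> nat \<Rightarrow> nat \<Rightarrow> (nat \<times> nat \<times> nat) set" where
  "U_index C m n = {(a, c, d). a \<ge> 1 \<and> c \<ge> 1 \<and> d \<ge> 1 \<and> coprime (a * c * d) (m * n)
     \<and> int (a * d) dvd (int m - int n) \<and> real c > C}"

lemma U_summand_eq_0:
  assumes W0: "\<forall>x. x \<notin> {1..2} \<longrightarrow> W x = 0" and Q: "Q > 0" and big: "real (a\<^sup>2 * c * d) > 2 * Q"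
  shows "U_summand W Q (a, c, d) = 0"
proof -
  have "real (a\<^sup>2 * c * d) / Q > 2" using big Q by (simp add: field_simps)
  then show ?thesis using W0 by (simp add: U_summand_def)
qed

lemma U_fun_eq_sum_box:
  assumes W0: "\<forall>x. x \<notin> {1..2} \<longrightarrow> W x = 0" and Q: "Q > 0" and N: "2 * Q \<le> real N"
  shows "U_fun W Q C m n = (\<Sum>t\<in>{1..N} \<times> {1..N} \<times> {1..N}. if t \<in> U_index C m n then U_summand W Q t else 0)"
proof -
  have outside: "U_summand W Q t = 0" if t: "t \<in> U_index C m n - {1..N} \<times> {1..N} \<times> {1..N}" for t
  proof -
    obtain a c d where acd: "t = (a, c, d)" by (cases t)
    have ge: "a \<ge> 1" "c \<ge> 1" "d \<ge> 1" using t unfolding acd U_index_def by auto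
    have "N < a \<or> N < c \<or> N < d" using t ge unfolding acd by auto
    then have "N < a\<^sup>2 * c * d" using factors_le_weight[OF ge] by linarith
    then have "2 * Q < real (a\<^sup>2 * c * d)" using N by (meson of_nat_less_iff order_le_less_trans)
    then show ?thesis unfolding acd by (rule U_summand_eq_0[OF W0 Q])
  qed
  have "U_fun W Q C m n = infsum (U_summand W Q) (U_index C m n)"
    unfolding U_fun_def U_summand_def U_index_def ..
  also have "\<dots> = infsum (U_summand W Q) (U_index C m n \<inter> {1..N} \<times> {1..N} \<times> {1..N})"
    by (rule infsum_cong_neutral) (use outside in auto)
  also have "\<dots> = (\<Sum>t\<in>{1..N} \<times> {1..N} \<times> {1..N}. if t \<in> U_index C m n then U_summand W Q t else 0)"
    by (simp add: sum.If_cases Int_commute)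
  finally show ?thesis .
qed

lemma sum_U_fun_eq_sum_box:
  fixes a b :: "nat \<Rightarrow> complex" and P :: "(nat \<times> nat) set"
  assumes W0: "\<forall>x. x \<notin> {1..2} \<longrightarrow> W x = 0" and Q: "Q > 0" and N: "2 * Q \<le> real N"
  shows "(\<Sum>(m, n)\<in>P. a m * b n * complex_of_real (U_fun W Q C m n))
    = (\<Sum>(x, y, z)\<in>{1..N} \<times> {1..N} \<times> {1..N}. complex_of_real (if C < real y then U_summand W Q (x, y, z) else 0) *
         (\<Sum>(m, n)\<in>P. a m * b n * (if coprime (x * y * z) (m * n) \<and> int (x * z) dvd (int m - int n) then 1 else 0)))"
proof -
  define B where "B = {1..N} \<times> {1..N} \<times> {1..N}"
  define w where "w = (\<lambda>(x, y, z). complex_of_real (if C < real y then U_summand W Q (x, y, z) else 0))"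
  define ind where "ind = (\<lambda>(x, y, z) (m, n).
    if coprime (x * y * z) (m * n) \<and> int (x * z) dvd (int m - int n) then 1 else (0::complex))"
  have summand_split: "complex_of_real (if t \<in> U_index C m n then U_summand W Q t else 0) = w t * ind t (m, n)"
    if "t \<in> B" for t m n
    using that unfolding B_def w_def ind_def U_index_def by (cases t) auto
  have "(\<Sum>(m, n)\<in>P. a m * b n * complex_of_real (U_fun W Q C m n))
      = (\<Sum>p\<in>P. \<Sum>t\<in>B. w t * (a (fst p) * b (snd p) * ind t p))"
    unfolding U_fun_eq_sum_box[OF W0 Q N] B_def[symmetric] of_real_sum
    by (intro sum.cong refl) (auto simp: sum_distrib_left summand_split mult_ac)
  also have "\<dots> = (\<Sum>t\<in>B. w t * (\<Sum>p\<in>P. a (fst p) * b (snd p) * ind t p))"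
    by (subst sum.swap) (simp add: sum_distrib_left)
  finally show ?thesis unfolding B_def w_def ind_def by (simp add: case_prod_beta)
qed

lemma abs_moebius_mu_le: "\<bar>real_of_int (moebius_mu n)\<bar> \<le> 1"
  by (simp add: moebius_mu_def power_abs)

lemma abs_U_summand_le:
  assumes Wm: "\<And>x. \<bar>W x\<bar> \<le> Wm"
    and tot: "\<And>n. n \<ge> 1 \<Longrightarrow> real n \<le> K * real (totient n) * real n powr \<eta>" and K: "K \<ge> 0" and \<eta>: "\<eta> \<ge> 0"
    and acd: "a \<ge> 1" "c \<ge> 1" "d \<ge> 1" and Y: "real (a\<^sup>2 * c * d) \<le> Y"
  shows "\<bar>U_summand W Q (a, c, d)\<bar> \<le> Wm * (K * Y powr \<eta> / ((real a)\<^sup>2 * real c))"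
proof -
  have "real (a * c) \<le> Y" using factors_le_weight(4)[OF acd] Y by (meson of_nat_le_iff order_trans)
  then have tot_ac: "1 / (real a * real (totient (a * c))) \<le> K * Y powr \<eta> / ((real a)\<^sup>2 * real c)"
    using inverse_mult_totient_le[OF tot K \<eta> acd(1,2)] by blast
  have "\<bar>U_summand W Q (a, c, d)\<bar> = \<bar>W (real (a\<^sup>2 * c * d) / Q)\<bar> * \<bar>real_of_int (moebius_mu a)\<bar>
      * \<bar>real_of_int (moebius_mu (a * c))\<bar> * (1 / (real a * real (totient (a * c))))"
    by (simp add: U_summand_def abs_mult)
  also have "\<dots> \<le> Wm * 1 * 1 * (K * Y powr \<eta> / ((real a)\<^sup>2 * real c))"
    using Wm abs_moebius_mu_le tot_ac acd by (intro mult_mono) (auto intro: order_trans[OF abs_ge_zero Wm])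
  finally show ?thesis by simp
qed

lemma U_E_bound:
  fixes a b :: "nat \<Rightarrow> complex"
  assumes W0: "\<forall>x. x \<notin> {1..2} \<longrightarrow> W x = 0" and Wm: "\<And>x. \<bar>W x\<bar> \<le> Wm"
    and Q: "Q \<ge> 2" and X: "1 \<le> X" "X \<le> Q\<^sup>2" and C: "C \<ge> 1"
    and tot: "\<And>n. n \<ge> 1 \<Longrightarrow> real n \<le> K * real (totient n) * real n powr \<eta>" and K: "K \<ge> 0" and \<eta>: "\<eta> \<ge> 0"
    and R: "R \<ge> 0"
    and pointwise: "\<And>m. m \<in> {1..nat \<lfloor>X\<rfloor>} \<Longrightarrow>
        norm (a m) \<le> R * real m powr (-1/2) \<and> norm (b m) \<le> R * real m powr (-1/2)"
    and twisted: "\<And>q \<psi>. q \<ge> 1 \<Longrightarrow> real q \<le> 2 * Q \<Longrightarrow> dirichlet_char q \<psi> \<Longrightarrow>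
        norm (\<Sum>m\<in>{1..nat \<lfloor>X\<rfloor>}. a m * \<psi> m) \<le> R \<and> norm (\<Sum>n\<in>{1..nat \<lfloor>X\<rfloor>}. b n * \<psi> n) \<le> R"
  shows "norm (\<Sum>(m, n) | 1 \<le> m \<and> real m \<le> X \<and> 1 \<le> n \<and> real n \<le> X \<and> m \<noteq> n.
              a m * b n * complex_of_real (U_fun W Q C m n))
       \<le> 8 * (Wm * (K * (2 * Q) powr \<eta>)) * Q / C * (R\<^sup>2 * (2 + 2 * ln Q))"
proof -
  define S where "S = {1..nat \<lfloor>X\<rfloor>}"
  define N where "N = nat \<lceil>2 * Q\<rceil>"
  define A where "A = Wm * (K * (2 * Q) powr \<eta>)"
  define E where "E x y z = (\<Sum>(m, n)\<in>{(m, n). m \<in> S \<and> n \<in> S \<and> m \<noteq> n}. a m * b n *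
      (if coprime (x * y * z) (m * n) \<and> int (x * z) dvd (int m - int n) then 1 else 0))" for x y z :: nat
  define g where "g = (\<lambda>(x, y, z). if C < real y \<and> real (x\<^sup>2 * y * z) \<le> 2 * Q then A / ((real x)\<^sup>2 * real y) else 0)"
  have A: "A \<ge> 0" unfolding A_def using order_trans[OF abs_ge_zero Wm] K by simp
  have pairs: "{(m, n). 1 \<le> m \<and> real m \<le> X \<and> 1 \<le> n \<and> real n \<le> X \<and> m \<noteq> n} = {(m, n). m \<in> S \<and> n \<in> S \<and> m \<noteq> n}"
    using nat_le_real_eq_atLeastAtMost[of X] unfolding S_def by blast
  have N: "2 * Q \<le> real N" unfolding N_def by linarith
  have UE: "(\<Sum>(m, n) | 1 \<le> m \<and> real m \<le> X \<and> 1 \<le> n \<and> real n \<le> X \<and> m \<noteq> n.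
        a m * b n * complex_of_real (U_fun W Q C m n))
      = (\<Sum>(x, y, z)\<in>{1..N} \<times> {1..N} \<times> {1..N}.
          complex_of_real (if C < real y then U_summand W Q (x, y, z) else 0) * E x y z)"
    unfolding pairs E_def by (rule sum_U_fun_eq_sum_box[OF W0 _ N]) (use Q in simp)
  have harmonic: "1 + (\<Sum>m\<in>S. 1 / real m) \<le> 2 + 2 * ln Q"
  proof -
    have "real (nat \<lfloor>X\<rfloor>) \<le> Q\<^sup>2" using X of_int_floor_le[of X] by linarith
    then have "ln (real (nat \<lfloor>X\<rfloor>)) \<le> ln (Q\<^sup>2)" using X by (subst ln_le_cancel_iff) auto
    moreover have "nat \<lfloor>X\<rfloor> \<ge> 1" using X le_nat_floor[of 1 X] by simp
    ultimately show ?thesis using harmonic_sum_le[of "nat \<lfloor>X\<rfloor>"] Q unfolding S_def by (simp add: ln_realpow)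
  qed
  have E: "norm (E x y z) \<le> R\<^sup>2 * (2 + 2 * ln Q)"
    if xyz: "x \<ge> 1" "y \<ge> 1" "z \<ge> 1" and small: "real (x\<^sup>2 * y * z) \<le> 2 * Q" for x y z
  proof -
    have "real (x * y * z) \<le> 2 * Q" using factors_le_weight(5)[OF xyz] small by (meson of_nat_le_iff order_trans)
    then have "dirichlet_char (x * y * z) \<psi> \<Longrightarrow>
        norm (\<Sum>m\<in>S. a m * \<psi> m) \<le> R \<and> norm (\<Sum>n\<in>S. b n * \<psi> n) \<le> R" for \<psi>
      using twisted[of "x * y * z"] xyz unfolding S_def by simp
    moreover have "x * z dvd x * y * z" by simp
    ultimately have "norm (E x y z) \<le> R\<^sup>2 * (1 + (\<Sum>m\<in>S. 1 / real m))"
      unfolding E_def using pointwise xyz unfolding S_def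
      by (intro off_diagonal_congruence_bound[OF _ _ R]) auto
    also have "\<dots> \<le> R\<^sup>2 * (2 + 2 * ln Q)" using harmonic by (intro mult_left_mono) auto
    finally show ?thesis .
  qed
  have "norm (complex_of_real (if C < real y then U_summand W Q (x, y, z) else 0) * E x y z)
      \<le> g (x, y, z) * (R\<^sup>2 * (2 + 2 * ln Q))" if "(x, y, z) \<in> {1..N} \<times> {1..N} \<times> {1..N}" for x y z
  proof (cases "C < real y \<and> real (x\<^sup>2 * y * z) \<le> 2 * Q")
    case True
    have xyz: "x \<ge> 1" "y \<ge> 1" "z \<ge> 1" using that by auto
    have "norm (complex_of_real (if C < real y then U_summand W Q (x, y, z) else 0) * E x y z)
        = \<bar>U_summand W Q (x, y, z)\<bar> * norm (E x y z)" using True by (simp add: norm_mult)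
    also have "\<dots> \<le> A / ((real x)\<^sup>2 * real y) * (R\<^sup>2 * (2 + 2 * ln Q))"
      using abs_U_summand_le[of W Wm, OF Wm tot K \<eta> xyz, where Y = "2 * Q" and Q = Q] E[OF xyz] True A unfolding A_def
      by (intro mult_mono) auto
    finally show ?thesis using True unfolding g_def by simp
  next
    case False
    then show ?thesis using that U_summand_eq_0[OF W0, of Q x y z] Q unfolding g_def by auto
  qed
  then have "norm (\<Sum>(x, y, z)\<in>{1..N} \<times> {1..N} \<times> {1..N}.
          complex_of_real (if C < real y then U_summand W Q (x, y, z) else 0) * E x y z)
      \<le> (\<Sum>t\<in>{1..N} \<times> {1..N} \<times> {1..N}. g t) * (R\<^sup>2 * (2 + 2 * ln Q))"
    unfolding sum_distrib_right by (intro order_trans[OF norm_sum sum_mono]) auto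
  also have "\<dots> \<le> (4 * A * (2 * Q) / C) * (R\<^sup>2 * (2 + 2 * ln Q))"
    using weight_sum_le[of "2 * Q" C A N] Q C A unfolding g_def
    by (intro mult_right_mono) (auto simp: case_prod_beta)
  finally show ?thesis unfolding UE A_def by simp
qed

lemma twisted_sum_hypothesis_bounds:
  fixes a b :: "nat \<Rightarrow> complex"
  assumes hyp: "\<forall>\<delta> K c l u v q \<psi>. \<delta> > 0 \<longrightarrow> K > 0 \<longrightarrow> c \<ge> 1 \<longrightarrow> l \<ge> 1 \<longrightarrow>
        real c \<le> K * X \<longrightarrow> real l \<le> K * X \<longrightarrow> u \<le> K * X \<longrightarrow> v \<le> K * X \<longrightarrow>
        dirichlet_char q \<psi> \<longrightarrow> real (conductor q \<psi>) \<le> K * Q \<longrightarrow>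
          norm (\<Sum>m | 1 \<le> m \<and> real m \<le> u \<and> coprime m c. a (m * l) * \<psi> m)
            \<le> B \<delta> K * real l powr (-1/2) * Q powr \<delta>
        \<and> norm (\<Sum>n | 1 \<le> n \<and> real n \<le> v \<and> coprime n c. b (n * l) * \<psi> n)
            \<le> B \<delta> K * real l powr (-1/2) * Q powr \<delta>"
    and X: "X \<ge> 1" and Q: "Q \<ge> 1" and \<delta>: "\<delta> > 0"
  defines "R \<equiv> \<bar>B \<delta> 2\<bar> * Q powr \<delta>"
  shows "\<And>m. m \<in> {1..nat \<lfloor>X\<rfloor>} \<Longrightarrow>
           norm (a m) \<le> R * real m powr (-1/2) \<and> norm (b m) \<le> R * real m powr (-1/2)"
    and "\<And>q \<psi>. q \<ge> 1 \<Longrightarrow> real q \<le> 2 * Q \<Longrightarrow> dirichlet_char q \<psi> \<Longrightarrow>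
           norm (\<Sum>m\<in>{1..nat \<lfloor>X\<rfloor>}. a m * \<psi> m) \<le> R \<and> norm (\<Sum>n\<in>{1..nat \<lfloor>X\<rfloor>}. b n * \<psi> n) \<le> R"
proof -
  have B: "B \<delta> 2 * real l powr (-1/2) * Q powr \<delta> \<le> R * real l powr (-1/2)" for l :: nat
    unfolding R_def using mult_right_mono[OF abs_ge_self[of "B \<delta> 2"], of "real l powr (-1/2) * Q powr \<delta>"]
    by (simp add: mult_ac)
  have principal: "dirichlet_char 1 (\<lambda>_. 1)" unfolding dirichlet_char_def by simp
  have hyp2: "norm (\<Sum>m | 1 \<le> m \<and> real m \<le> u \<and> coprime m 1. a (m * l) * \<psi> m) \<le> R * real l powr (-1/2)
      \<and> norm (\<Sum>n | 1 \<le> n \<and> real n \<le> u \<and> coprime n 1. b (n * l) * \<psi> n) \<le> R * real l powr (-1/2)"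
    if "l \<ge> 1" "real l \<le> X" "u \<le> X" "dirichlet_char q \<psi>" "real (conductor q \<psi>) \<le> 2 * Q" for l u q \<psi>
  proof -
    have "norm (\<Sum>m | 1 \<le> m \<and> real m \<le> u \<and> coprime m 1. a (m * l) * \<psi> m) \<le> B \<delta> 2 * real l powr (-1/2) * Q powr \<delta>
      \<and> norm (\<Sum>n | 1 \<le> n \<and> real n \<le> u \<and> coprime n 1. b (n * l) * \<psi> n) \<le> B \<delta> 2 * real l powr (-1/2) * Q powr \<delta>"
      by (rule hyp[rule_format]) (use that X \<delta> in auto)
    then show ?thesis using B[of l] by linarith
  qed
  show "norm (a m) \<le> R * real m powr (-1/2) \<and> norm (b m) \<le> R * real m powr (-1/2)"
    if m: "m \<in> {1..nat \<lfloor>X\<rfloor>}" for m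
  proof -
    \<comment> \<open>a m is the twisted sum of length 1 with l = m\<close>
    have "{k::nat. 1 \<le> k \<and> real k \<le> 1 \<and> coprime k 1} = {1}" by auto
    moreover have "real m \<le> X" using m nat_le_real_eq_atLeastAtMost[of X] by blast
    ultimately show ?thesis
      using hyp2[of m 1 1 "\<lambda>_. 1"] m X Q principal conductor_le[OF principal] by simp
  qed
  show "norm (\<Sum>m\<in>{1..nat \<lfloor>X\<rfloor>}. a m * \<psi> m) \<le> R \<and> norm (\<Sum>n\<in>{1..nat \<lfloor>X\<rfloor>}. b n * \<psi> n) \<le> R"
    if q: "q \<ge> 1" "real q \<le> 2 * Q" "dirichlet_char q \<psi>" for q \<psi>
  proof -
    have "{m::nat. 1 \<le> m \<and> real m \<le> X \<and> coprime m 1} = {1..nat \<lfloor>X\<rfloor>}"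
      using nat_le_real_eq_atLeastAtMost[of X] by simp
    moreover have "real (conductor q \<psi>) \<le> 2 * Q" using conductor_le[OF q(3)] q(2) by linarith
    ultimately show ?thesis using hyp2[of 1 X q \<psi>] X q by simp
  qed
qed

lemma collect_powers_of_Q:
  fixes Q C Wm K \<beta> \<epsilon> :: real
  assumes Q: "Q \<ge> 1" and C: "C > 0" and \<epsilon>: "\<epsilon> > 0" and Wm: "Wm \<ge> 0" and K: "K \<ge> 0"
  shows "8 * (Wm * (K * (2 * Q) powr (\<epsilon> / 4))) * Q / C * ((\<beta> * Q powr (\<epsilon> / 4))\<^sup>2 * (2 + 2 * ln Q))
    \<le> (8 * Wm * K * 2 powr (\<epsilon> / 4) * \<beta>\<^sup>2 * (2 + 8 / \<epsilon>)) * (Q / C) * Q powr \<epsilon>"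
proof -
  define \<eta> where "\<eta> = \<epsilon> / 4"
  have "ln Q \<le> Q powr \<eta> / \<eta>" using Q \<epsilon> unfolding \<eta>_def by (intro ln_powr_bound) auto
  moreover have "1 \<le> Q powr \<eta>" using Q \<epsilon> unfolding \<eta>_def by (intro ge_one_powr_ge_zero) auto
  ultimately have log: "2 + 2 * ln Q \<le> (2 + 8 / \<epsilon>) * Q powr \<eta>"
    unfolding \<eta>_def by (simp add: field_simps)
  have "8 * (Wm * (K * (2 * Q) powr \<eta>)) * Q / C * ((\<beta> * Q powr \<eta>)\<^sup>2 * (2 + 2 * ln Q))
      \<le> 8 * (Wm * (K * (2 * Q) powr \<eta>)) * Q / C * ((\<beta> * Q powr \<eta>)\<^sup>2 * ((2 + 8 / \<epsilon>) * Q powr \<eta>))"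
    using log Q C Wm K by (intro mult_left_mono) auto
  also have "\<dots> = (8 * Wm * K * 2 powr \<eta> * \<beta>\<^sup>2 * (2 + 8 / \<epsilon>)) * (Q / C) * (Q powr \<eta> * Q powr \<eta> * Q powr \<eta> * Q powr \<eta>)"
    using Q by (simp add: powr_mult power2_eq_square field_simps)
  also have "Q powr \<eta> * Q powr \<eta> * Q powr \<eta> * Q powr \<eta> = Q powr \<epsilon>"
    unfolding \<eta>_def by (simp flip: powr_add)
  finally show ?thesis unfolding \<eta>_def .
qed

theorem lemma3:
  fixes W :: "real \<Rightarrow> real" and B :: "real \<Rightarrow> real \<Rightarrow> real" and \<epsilon> :: real
  assumes "smooth_fun W" and "\<forall>x. x \<notin> {1..2} \<longrightarrow> W x = 0" and "\<epsilon> > 0"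
  shows "\<exists>M. \<forall>(Q::real) (X::real) (C::real) (a::nat \<Rightarrow> complex) (b::nat \<Rightarrow> complex).
     Q \<ge> 2 \<longrightarrow> 1 \<le> X \<longrightarrow> X \<le> Q^2 \<longrightarrow> C \<ge> 1 \<longrightarrow>
     (\<forall>n. real n > X \<longrightarrow> a n = 0 \<and> b n = 0) \<longrightarrow>
     (\<forall>\<delta> K c l u v q \<psi>. \<delta> > 0 \<longrightarrow> K > 0 \<longrightarrow> c \<ge> 1 \<longrightarrow> l \<ge> 1 \<longrightarrow>
        real c \<le> K * X \<longrightarrow> real l \<le> K * X \<longrightarrow> u \<le> K * X \<longrightarrow> v \<le> K * X \<longrightarrow>
        dirichlet_char q \<psi> \<longrightarrow> real (conductor q \<psi>) \<le> K * Q \<longrightarrow>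
          norm (\<Sum>m | 1 \<le> m \<and> real m \<le> u \<and> coprime m c. a (m * l) * \<psi> m)
            \<le> B \<delta> K * real l powr (-1/2) * Q powr \<delta>
        \<and> norm (\<Sum>n | 1 \<le> n \<and> real n \<le> v \<and> coprime n c. b (n * l) * \<psi> n)
            \<le> B \<delta> K * real l powr (-1/2) * Q powr \<delta>) \<longrightarrow>
     norm (\<Sum>(m, n) | 1 \<le> m \<and> real m \<le> X \<and> 1 \<le> n \<and> real n \<le> X \<and> m \<noteq> n.
              a m * b n * complex_of_real (U_fun W Q C m n))
       \<le> M * (Q / C) * Q powr \<epsilon>"
proof -
  have \<eta>: "\<epsilon> / 4 > 0" using assms(3) by simp
  obtain Wm where Wm: "Wm \<ge> 0" "\<And>x. \<bar>W x\<bar> \<le> Wm" using smooth_compact_support_bounded[OF assms(1,2)] by blast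
  obtain K where K: "K > 0" "\<And>n. n \<ge> 1 \<Longrightarrow> real n \<le> K * real (totient n) * real n powr (\<epsilon> / 4)"
    using totient_lower_bound[OF \<eta>] by blast
  show ?thesis
  proof (intro exI[of _ "8 * Wm * K * 2 powr (\<epsilon> / 4) * \<bar>B (\<epsilon> / 4) 2\<bar>\<^sup>2 * (2 + 8 / \<epsilon>)"] allI impI, goal_cases)
    case (1 Q X C a b)
    then have "Q \<ge> 1" "C > 0" by auto
    note bounds = twisted_sum_hypothesis_bounds[OF 1(6) 1(2) \<open>Q \<ge> 1\<close> \<eta>]
    show ?case
      by (rule order_trans[OF U_E_bound[OF assms(2) Wm(2) 1(1-4) K(2) _ _ _ bounds] collect_powers_of_Q])
        (use \<open>Q \<ge> 1\<close> \<open>C > 0\<close> assms(3) Wm(1) K(1) in auto)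
  qed
qed

end
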